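(* Let $\mathcal M\subset{}^d\mathcal K$ be maximal isotropic. If $n_+(\mathcal M)=0$, then $\dim\ker\Delta(\mathcal M,\underline a)\leq n_0(\mathcal M)$.
   Context: Let $\mathcal G=(V,\mathcal I,\mathcal E,\partial)$ be a finite connected graph with internal edges $\mathcal I$ (intervals $I_i=[0,a_i]$, $a_i>0$) and external edges $\mathcal E$ (half-lines $I_e=[0,\infty)$). $\mathcal H=\bigoplus_jL^2(I_j)$; $\mathcal D$ = $\psi\in\mathcal H$ with $\psi_j,\psi_j'$ absolutely continuous, $\psi_j''\in L^2$. $\mathcal K=\mathbb C^{|\mathcal E|}\oplus\mathbb C^{|\mathcal I|}\oplus\mathbb C^{|\mathcal I|}$, ${}^d\mathcal K=\mathcal K\oplus\mathcal K$. For $\psi\in\mathcal D$: $\underline\psi=(\{\psi_e(0)\},\{\psi_i(0)\},\{\psi_i(a_i)\})$, $\underline\psi'=(\{\psi_e'(0)\},\{\psi_i'(0)\},\{-\psi_i'(a_i)\})$. Maximal isotropic subspaces of ${}^d\mathcal K$ are exactly $\mathcal M(A,B)=\{\chi_1\oplus\chi_2:A\chi_1+B\chi_2=0\}$ with $A,B$ linear on $\mathcal K$, $(A,B)$ of rank $|\mathcal E|+2|\mathcal I|$ and $AB^\dagger$ self-adjoint. $\Delta(\mathcal M,\underline a)$ is the self-adjoint operator $(\Delta\psi)_j=\psi_j''$ on $\{\psi\in\mathcal D:A\underline\psi+B\underline\psi'=0\}$. $n_+(\mathcal M)$, $n_0(\mathcal M)$ are the numbers of positive, resp. zero, eigenvalues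 (with multiplicity) of $AB^\dagger$, independent of the choice of $(A,B)$ with $\mathcal M=\mathcal M(A,B)$. *)

theory Defs
  imports "HOL-Analysis.Analysis" "HOL-Library.Function_Algebras"
    "Jordan_Normal_Form.Spectral_Radius" "Jordan_Normal_Form.DL_Rank"
begin

text \<open>Edges of the metric graph: external edges are Inl e (e < nE), half-lines [0,inf);
  internal edges are Inr i (i < nI), intervals [0, a i].
  The auxiliary space K = C^nE + C^nI + C^nI is C^(nE + 2 nI), with coordinates
  0..nE-1 (external, at 0), nE..nE+nI-1 (internal, at 0), nE+nI..nE+2nI-1 (internal, at a i).\<close>

type_synonym edge = "nat + nat"

definition edges :: "nat \<Rightarrow> nat \<Rightarrow> edge set" where
  "edges nE nI = Inl ` {..<nE} \<union> Inr ` {..<nI}"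

definition edge_interval :: "(nat \<Rightarrow> real) \<Rightarrow> edge \<Rightarrow> real set" where
  "edge_interval a j = (case j of Inl e \<Rightarrow> {0..} | Inr i \<Rightarrow> {0..a i})"

definition L2_on :: "real set \<Rightarrow> (real \<Rightarrow> complex) \<Rightarrow> bool" where
  "L2_on S f \<longleftrightarrow> set_borel_measurable lborel S f \<and>
     set_integrable lborel S (\<lambda>x. (cmod (f x))\<^sup>2)"

text \<open>psi in the domain D, with psi1 = psi' and psi2 = psi'' on every edge:
  psi_j and psi_j' absolutely continuous (written as indefinite integrals of
  locally integrable functions), psi_j and psi_j'' in L^2.  Outside the edges
  and outside the intervals psi is normalised to 0 (psi is an element of the
  direct sum of the L^2(I_j), continuous representatives on I_j).\<close>
definition in_dom :: "nat \<Rightarrow> nat \<Rightarrow> (nat \<Rightarrow> real) \<Rightarrow>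
    (edge \<Rightarrow> real \<Rightarrow> complex) \<Rightarrow> (edge \<Rightarrow> real \<Rightarrow> complex) \<Rightarrow>
    (edge \<Rightarrow> real \<Rightarrow> complex) \<Rightarrow> bool" where
  "in_dom nE nI a \<psi> \<psi>1 \<psi>2 \<longleftrightarrow>
     (\<forall>j. j \<notin> edges nE nI \<longrightarrow> \<psi> j = (\<lambda>x. 0)) \<and>
     (\<forall>j\<in>edges nE nI.
        (\<forall>x. x \<notin> edge_interval a j \<longrightarrow> \<psi> j x = 0) \<and>
        L2_on (edge_interval a j) (\<psi> j) \<and>
        L2_on (edge_interval a j) (\<psi>2 j) \<and>
        (\<forall>x\<in>edge_interval a j.
            set_integrable lborel {0..x} (\<psi>1 j) \<and>
            set_integrable lborel {0..x} (\<psi>2 j) \<and>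
            \<psi> j x = \<psi> j 0 + (LBINT t:{0..x}. \<psi>1 j t) \<and>
            \<psi>1 j x = \<psi>1 j 0 + (LBINT t:{0..x}. \<psi>2 j t)))"

definition bval :: "nat \<Rightarrow> nat \<Rightarrow> (nat \<Rightarrow> real) \<Rightarrow> (edge \<Rightarrow> real \<Rightarrow> complex) \<Rightarrow> complex vec" where
  "bval nE nI a \<psi> = vec (nE + 2 * nI) (\<lambda>k.
      if k < nE then \<psi> (Inl k) 0
      else if k < nE + nI then \<psi> (Inr (k - nE)) 0
      else \<psi> (Inr (k - nE - nI)) (a (k - nE - nI)))"

definition bder :: "nat \<Rightarrow> nat \<Rightarrow> (nat \<Rightarrow> real) \<Rightarrow> (edge \<Rightarrow> real \<Rightarrow> complex) \<Rightarrow> complex vec" where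
  "bder nE nI a \<psi>1 = vec (nE + 2 * nI) (\<lambda>k.
      if k < nE then \<psi>1 (Inl k) 0
      else if k < nE + nI then \<psi>1 (Inr (k - nE)) 0
      else - \<psi>1 (Inr (k - nE - nI)) (a (k - nE - nI)))"

definition Delta_dom :: "nat \<Rightarrow> nat \<Rightarrow> (nat \<Rightarrow> real) \<Rightarrow> complex mat \<Rightarrow> complex mat \<Rightarrow>
    (edge \<Rightarrow> real \<Rightarrow> complex) set" where
  "Delta_dom nE nI a A B = {\<psi>. \<exists>\<psi>1 \<psi>2. in_dom nE nI a \<psi> \<psi>1 \<psi>2 \<and>
      A *\<^sub>v bval nE nI a \<psi> + B *\<^sub>v bder nE nI a \<psi>1 = 0\<^sub>v (nE + 2 * nI)}"

definition Delta_ker :: "nat \<Rightarrow> nat \<Rightarrow> (nat \<Rightarrow> real) \<Rightarrow> complex mat \<Rightarrow> complex mat \<Rightarrow>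
    (edge \<Rightarrow> real \<Rightarrow> complex) set" where
  "Delta_ker nE nI a A B = {\<psi>. \<exists>\<psi>1 \<psi>2. in_dom nE nI a \<psi> \<psi>1 \<psi>2 \<and>
      A *\<^sub>v bval nE nI a \<psi> + B *\<^sub>v bder nE nI a \<psi>1 = 0\<^sub>v (nE + 2 * nI) \<and>
      (\<forall>j\<in>edges nE nI. AE x in lborel. x \<in> edge_interval a j \<longrightarrow> \<psi>2 j x = 0)}"

definition fscale :: "complex \<Rightarrow> (edge \<Rightarrow> real \<Rightarrow> complex) \<Rightarrow> (edge \<Rightarrow> real \<Rightarrow> complex)" where
  "fscale c \<psi> = (\<lambda>j x. c * \<psi> j x)"

definition n_plus :: "complex mat \<Rightarrow> nat" where
  "n_plus M = (\<Sum>k\<in>{k. eigenvalue M k \<and> Im k = 0 \<and> Re k > 0}. Polynomial.order k (char_poly M))"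

definition n_zero :: "complex mat \<Rightarrow> nat" where
  "n_zero M = (if eigenvalue M 0 then Polynomial.order 0 (char_poly M) else 0)"

end

(*
  A function psi in the kernel is affine on every edge and, being square integrable, vanishes
  on the half-lines.  Its boundary data satisfy A psi + B psi' = 0, and maximal isotropy of
  M(A,B) gives (psi, psi') = (-B* phi, A* phi) for some phi.  Green's formula for psi'' = 0
  evaluates the boundary form <psi', psi> to -sum_i a_i |psi_i'|^2 <= 0, whereas in terms of phi
  it is -<AB* phi, phi> >= 0, because the Hermitian matrix AB* has no positive eigenvalue.
  Hence psi' = 0 and A* phi = 0, so phi lies in the kernel of AB* = BA*, and psi, which
  depends linearly on phi, ranges over a space of dimension at most dim ker AB* <= n_0.
*)
theory Submission
  imports Defs "Jordan_Normal_Form.Jordan_Normal_Form_Uniqueness"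
begin

unbundle no vec_syntax


section \<open>Adjoints and the inner product on \<open>\<complex>\<^sup>n\<close>\<close>

lemma mult_mat_vec_zero [simp]: "A \<in> carrier_mat nr n \<Longrightarrow> A *\<^sub>v 0\<^sub>v n = 0\<^sub>v nr"
  by (rule eq_vecI) auto

lemma smult_zero_vec [simp]: "c \<cdot>\<^sub>v 0\<^sub>v n = (0\<^sub>v n :: 'a :: mult_zero vec)"
  by (rule eq_vecI) auto

lemma smult_mult_mat_vec: "dim_vec v = dim_col A \<Longrightarrow> (c \<cdot>\<^sub>m A) *\<^sub>v v = c \<cdot>\<^sub>v (A *\<^sub>v (v :: complex vec))"
  by (intro eq_vecI) (auto simp: scalar_prod_def sum_distrib_left mult.assoc)

lemma add_eq_zero_vec_iff:
  fixes a b :: "'a :: ab_group_add vec"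
  assumes "a \<in> carrier_vec n" "b \<in> carrier_vec n"
  shows "a + b = 0\<^sub>v n \<longleftrightarrow> a = - b"
  using assms by (auto simp: vec_eq_iff eq_neg_iff_add_eq_0)

lemma mult_mat_vec_coordinates:
  fixes M :: "'a :: comm_semiring_1 mat"
  assumes M: "M \<in> carrier_mat nr n" and k: "k < nr"
    and \<phi>: "\<phi> \<in> carrier_vec n" and coords: "\<forall>l<n. \<phi> $ l = (\<Sum>b\<in>Bs. \<alpha> b * b $ l)"
    and Bs: "Bs \<subseteq> carrier_vec n"
  shows "(M *\<^sub>v \<phi>) $ k = (\<Sum>b\<in>Bs. \<alpha> b * (M *\<^sub>v b) $ k)"
proof -
  have "(M *\<^sub>v \<phi>) $ k = (\<Sum>l<n. M $$ (k, l) * (\<Sum>b\<in>Bs. \<alpha> b * b $ l))"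
    using M k \<phi> coords by (auto simp: scalar_prod_def lessThan_atLeast0 intro!: sum.cong)
  also have "\<dots> = (\<Sum>l<n. \<Sum>b\<in>Bs. \<alpha> b * (M $$ (k, l) * b $ l))"
    unfolding sum_distrib_left by (intro sum.cong refl) (rule mult.left_commute)
  also have "\<dots> = (\<Sum>b\<in>Bs. \<alpha> b * (\<Sum>l<n. M $$ (k, l) * b $ l))"
    by (subst sum.swap) (simp add: sum_distrib_left)
  also have "\<dots> = (\<Sum>b\<in>Bs. \<alpha> b * (M *\<^sub>v b) $ k)"
    using M k Bs by (intro sum.cong refl) (auto simp: scalar_prod_def lessThan_atLeast0 intro!: sum.cong)
  finally show ?thesis .
qed

lemma square_mat_invertible_of_kernel_trivial:
  fixes M :: "'a :: field mat"
  assumes M: "M \<in> carrier_mat n n"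
    and trivial: "\<And>x. x \<in> carrier_vec n \<Longrightarrow> M *\<^sub>v x = 0\<^sub>v n \<Longrightarrow> x = 0\<^sub>v n"
  obtains C where "C \<in> carrier_mat n n" "M * C = 1\<^sub>m n" "C * M = 1\<^sub>m n"
proof -
  have "det M \<noteq> 0" using det_0_iff_vec_prod_zero[OF M] trivial by auto
  from det_non_zero_imp_unit[OF M this, unfolded Units_def, of "()"] that
  show ?thesis by (auto simp: ring_mat_def)
qed

abbreviation adj :: "complex mat \<Rightarrow> complex mat" where "adj \<equiv> mat_adjoint"

lemma adj_dims [simp]: "dim_row (adj A) = dim_col A" "dim_col (adj A) = dim_row A"
  by (auto simp: mat_adjoint_def mat_of_rows_def)

lemma adj_carrier [simp]: "A \<in> carrier_mat nr nc \<Longrightarrow> adj A \<in> carrier_mat nc nr"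
  by (metis adj_dims carrier_matD carrier_matI)

lemma adj_mult_vec_carrier [simp]:
  "A \<in> carrier_mat nr nc \<Longrightarrow> x \<in> carrier_vec nr \<Longrightarrow> adj A *\<^sub>v x \<in> carrier_vec nc"
  by (metis adj_carrier mult_mat_vec_carrier)

lemma adj_index [simp]: "i < dim_col A \<Longrightarrow> j < dim_row A \<Longrightarrow> adj A $$ (i, j) = cnj (A $$ (j, i))"
  by (auto simp: mat_adjoint_def mat_of_rows_def)

lemma adj_adj [simp]: "adj (adj A) = A"
  by (rule eq_matI) auto

lemma adj_one [simp]: "adj (1\<^sub>m n) = 1\<^sub>m n"
  by (rule eq_matI) auto

lemma adj_mult: "A \<in> carrier_mat nr n \<Longrightarrow> B \<in> carrier_mat n nc \<Longrightarrow> adj (A * B) = adj B * adj A"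
  by (rule eq_matI) (auto simp: scalar_prod_def mult.commute)

lemma adj_add: "A \<in> carrier_mat nr nc \<Longrightarrow> B \<in> carrier_mat nr nc \<Longrightarrow> adj (A + B) = adj A + adj B"
  by (rule eq_matI) auto

lemma adj_smult: "adj (c \<cdot>\<^sub>m A) = cnj c \<cdot>\<^sub>m adj A"
  by (rule eq_matI) auto

lemma adj_mult_vec_index:
  "A \<in> carrier_mat nr nc \<Longrightarrow> x \<in> carrier_vec nr \<Longrightarrow> i < nc \<Longrightarrow>
   (adj A *\<^sub>v x) $ i = (\<Sum>j<nr. cnj (A $$ (j, i)) * x $ j)"
  by (auto simp: scalar_prod_def lessThan_atLeast0 intro!: sum.cong)

lemma adj_add_smult_mult_vec:
  assumes "A \<in> carrier_mat n n" "B \<in> carrier_mat n n" "x \<in> carrier_vec n"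
  shows "adj (A + c \<cdot>\<^sub>m B) *\<^sub>v x = adj A *\<^sub>v x + cnj c \<cdot>\<^sub>v (adj B *\<^sub>v x)"
  using assms by (simp add: adj_add[of _ n n] adj_smult add_mult_distrib_mat_vec[of _ n n] smult_mult_mat_vec)

lemma cscalar_prod_as_sum:
  "x \<in> carrier_vec n \<Longrightarrow> y \<in> carrier_vec n \<Longrightarrow> x \<bullet>c y = (\<Sum>i<n. x $ i * cnj (y $ i))"
  by (auto simp: scalar_prod_def lessThan_atLeast0 intro!: sum.cong)

lemma cscalar_prod_swap: "dim_vec x = dim_vec y \<Longrightarrow> y \<bullet>c x = cnj (x \<bullet>c (y :: complex vec))"
  by (simp add: scalar_prod_def mult.commute)

lemma cscalar_prod_smult_left: "dim_vec x = dim_vec y \<Longrightarrow> (c \<cdot>\<^sub>v x) \<bullet>c y = c * (x \<bullet>c (y :: complex vec))"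
  by (simp add: scalar_prod_def sum_distrib_left mult_ac)

lemma cscalar_prod_smult_right: "dim_vec x = dim_vec y \<Longrightarrow> x \<bullet>c (c \<cdot>\<^sub>v y) = cnj c * (x \<bullet>c (y :: complex vec))"
  by (simp add: scalar_prod_def sum_distrib_left mult_ac)

lemma cscalar_prod_smult_both:
  "dim_vec v = dim_vec w \<Longrightarrow> (a \<cdot>\<^sub>v v) \<bullet>c (b \<cdot>\<^sub>v w) = a * cnj b * (v \<bullet>c (w :: complex vec))"
  by (simp add: cscalar_prod_smult_left cscalar_prod_smult_right)

lemma cscalar_prod_uminus_right: "dim_vec y = dim_vec x \<Longrightarrow> x \<bullet>c (- y) = - (x \<bullet>c (y :: complex vec))"
  by (simp add: scalar_prod_def sum_negf)

lemma cscalar_prod_append: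
  assumes "v1 \<in> carrier_vec n1" "v2 \<in> carrier_vec n2" "w1 \<in> carrier_vec n1" "w2 \<in> carrier_vec n2"
  shows "(v1 @\<^sub>v v2) \<bullet>c (w1 @\<^sub>v w2) = v1 \<bullet>c w1 + v2 \<bullet>c (w2 :: complex vec)"
proof -
  have "conjugate (w1 @\<^sub>v w2) = conjugate w1 @\<^sub>v conjugate w2"
    using assms by (intro eq_vecI) auto
  then show ?thesis using assms by (simp add: scalar_prod_append[of _ n1 _ n2])
qed

lemma cscalar_prod_adj:
  assumes A: "A \<in> carrier_mat nr nc" and x: "x \<in> carrier_vec nc" and y: "y \<in> carrier_vec nr"
  shows "(A *\<^sub>v x) \<bullet>c y = x \<bullet>c (adj A *\<^sub>v y)"
proof -
  have "(A *\<^sub>v x) \<bullet>c y = (\<Sum>i<nr. (\<Sum>j<nc. A $$ (i, j) * x $ j) * cnj (y $ i))"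
    using A x y by (auto simp: scalar_prod_def lessThan_atLeast0 intro!: sum.cong)
  also have "\<dots> = (\<Sum>j<nc. x $ j * cnj (\<Sum>i<nr. cnj (A $$ (i, j)) * y $ i))"
    by (simp add: sum_distrib_left sum_distrib_right mult_ac sum.swap[of _ "{..<nr}"])
  also have "\<dots> = x \<bullet>c (adj A *\<^sub>v y)"
    using A x y by (auto simp: scalar_prod_def lessThan_atLeast0 intro!: sum.cong)
  finally show ?thesis .
qed

lemma cscalar_prod_self_real: "Im ((x :: complex vec) \<bullet>c x) = 0" "0 \<le> Re (x \<bullet>c x)"
  using conjugate_square_ge_0_vec[of x] by (auto simp: less_eq_complex_def)

lemma cscalar_prod_normalize:
  fixes v :: "complex vec"
  assumes "v \<bullet>c v \<noteq> 0"
  shows "(of_real (1 / sqrt (Re (v \<bullet>c v))) \<cdot>\<^sub>v v) \<bullet>c (of_real (1 / sqrt (Re (v \<bullet>c v))) \<cdot>\<^sub>v v) = 1"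
proof -
  define r where "r = Re (v \<bullet>c v)"
  have vv: "v \<bullet>c v = of_real r" using cscalar_prod_self_real(1)[of v] by (simp add: r_def complex_eq_iff)
  have "r \<noteq> 0" using assms vv by auto
  then have r: "r > 0" using cscalar_prod_self_real(2)[of v] by (simp add: r_def)
  have "(of_real (1 / sqrt r) \<cdot>\<^sub>v v) \<bullet>c (of_real (1 / sqrt r) \<cdot>\<^sub>v v)
      = of_real (1 / sqrt r) * cnj (of_real (1 / sqrt r)) * (v \<bullet>c v)"
    by (rule cscalar_prod_smult_both) simp
  also have "\<dots> = of_real (1 / sqrt r * (1 / sqrt r) * r)"
    by (simp only: vv complex_cnj_complex_of_real of_real_mult)
  also have "1 / sqrt r * (1 / sqrt r) * r = 1" using r by (simp add: field_simps)
  finally show ?thesis by (simp add: r_def)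
qed

lemma col_cscalar_prod_eq_cnj_adj:
  assumes C: "C \<in> carrier_mat n nc" and k: "k < nc" and x: "x \<in> carrier_vec n"
  shows "col C k \<bullet>c x = cnj ((adj C *\<^sub>v x) $ k)"
  unfolding adj_mult_vec_index[OF C x k] using C k x
  by (simp add: cscalar_prod_as_sum[of _ n] mult.commute)

lemma hermitian_form_real:
  assumes H: "H \<in> carrier_mat n n" and herm: "adj H = H" and x: "x \<in> carrier_vec n"
  shows "Im ((H *\<^sub>v x) \<bullet>c x) = 0"
proof -
  have "(H *\<^sub>v x) \<bullet>c x = x \<bullet>c (H *\<^sub>v x)"
    using cscalar_prod_adj[OF H x x] herm by simp
  also have "\<dots> = cnj ((H *\<^sub>v x) \<bullet>c x)"
    using H x by (intro cscalar_prod_swap) auto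
  finally show ?thesis by (metis cnj.sel(2) neg_equal_zero)
qed

lemma hermitian_product_swap:
  assumes A: "A \<in> carrier_mat n n" and B: "B \<in> carrier_mat n n"
    and herm: "adj (A * adj B) = A * adj B"
  shows "B * adj A = A * adj B"
  using herm adj_mult[OF A adj_carrier[OF B]] by simp

lemma kernel_trivial_of_adj_kernel_trivial:
  assumes M: "M \<in> carrier_mat n n"
    and trivial: "\<And>x. x \<in> carrier_vec n \<Longrightarrow> adj M *\<^sub>v x = 0\<^sub>v n \<Longrightarrow> x = 0\<^sub>v n"
    and z: "z \<in> carrier_vec n" and Mz: "M *\<^sub>v z = 0\<^sub>v n"
  shows "z = 0\<^sub>v n"
proof -
  obtain C where C: "C \<in> carrier_mat n n" "adj M * C = 1\<^sub>m n"
    using square_mat_invertible_of_kernel_trivial[OF adj_carrier[OF M] trivial] by blast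
  have "adj C * M = 1\<^sub>m n"
    using arg_cong[OF C(2), of adj] adj_mult[OF adj_carrier[OF M] C(1)] by simp
  then have "z = adj C *\<^sub>v (M *\<^sub>v z)"
    using assoc_mult_mat_vec[OF adj_carrier[OF C(1)] M z] z by simp
  then show ?thesis using Mz C(1) by simp
qed

section \<open>The boundary relation \<open>A\<chi>\<^sub>1 + B\<chi>\<^sub>2 = 0\<close>\<close>

lemma (in vec_space) full_rank_cols_span:
  assumes A: "A \<in> carrier_mat n nc" and rank: "rank A = n"
  shows "span (set (cols A)) = carrier_vec n"
proof -
  have cols: "set (cols A) \<subseteq> carrier_vec n" using A by (auto simp: cols_def)
  obtain S where S: "finite S" "maximal S (\<lambda>T. T \<subseteq> set (cols A) \<and> lin_indpt T)"
    using maximal_exists_superset[of "set (cols A)" "\<lambda>T. T \<subseteq> set (cols A) \<and> lin_indpt T" "{}"]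
    by (auto simp: lin_dep_def)
  have S_cols: "S \<subseteq> set (cols A)" and "lin_indpt S" using S(2) unfolding maximal_def by auto
  moreover have "card S = n" using rank_card_indpt[OF A S(2)] rank by simp
  ultimately have "basis S" using dim_li_is_basis[OF fin_dim S(1)] cols by (auto simp: dim_is_n)
  then have "carrier_vec n \<subseteq> span S" unfolding basis_def by auto
  also have "\<dots> \<subseteq> span (set (cols A))" by (rule span_is_monotone[OF S_cols])
  finally show ?thesis using span_closed[OF cols] by auto
qed

text \<open>The rank hypothesis says that the columns of \<open>(A B)\<close> span \<open>\<complex>\<^sup>n\<close>; a vector orthogonal
  to all of them is orthogonal to itself.\<close>

lemma full_rank_adj_kernels_trivial:
  fixes A B :: "complex mat"
  assumes A: "A \<in> carrier_mat n n" and B: "B \<in> carrier_mat n n"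
    and rank: "vec_space.rank n (mat_of_cols n (cols A @ cols B)) = n"
    and x: "x \<in> carrier_vec n" and Ax: "adj A *\<^sub>v x = 0\<^sub>v n" and Bx: "adj B *\<^sub>v x = 0\<^sub>v n"
  shows "x = 0\<^sub>v n"
proof -
  interpret vec_space "TYPE(complex)" n .
  let ?S = "set (cols A @ cols B)"
  have S: "?S \<subseteq> carrier_vec n" using A B by (auto simp: cols_def)
  have "span ?S = carrier_vec n"
    using full_rank_cols_span[OF mat_of_cols_carrier(1) rank] S by (simp add: cols_mat_of_cols)
  have "s \<bullet>c x = 0" if "s \<in> ?S" for s
  proof -
    from that obtain C k where C: "C = A \<or> C = B" and k: "k < n" and s: "s = col C k"
      using A B by (auto simp: cols_def) blast+
    then have "adj C *\<^sub>v x = 0\<^sub>v n" using Ax Bx by auto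
    then show ?thesis using C k x A B by (auto simp: s col_cscalar_prod_eq_cnj_adj[of _ n n])
  qed
  moreover have "conjugate x \<bullet> s = s \<bullet>c x" if "s \<in> ?S" for s
    using that S x by (intro comm_scalar_prod[of _ n]) auto
  ultimately have "conjugate x \<in> orthogonal_complement ?S"
    using x unfolding orthogonal_complement_def by auto
  then have "conjugate x \<in> orthogonal_complement (span ?S)"
    using S by (subst in_orthogonal_complement_span) auto
  then have "conjugate x \<bullet> x = 0"
    using x \<open>span ?S = carrier_vec n\<close> unfolding orthogonal_complement_def by auto
  then have "x \<bullet>c x = 0" using x by (simp add: conjugate_vec_sprod_comm[OF x x])
  then show ?thesis using x by simp
qed

text \<open>If \<open>A\<^sup>*x = -conj c B\<^sup>*x\<close>, then \<open>\<langle>AB\<^sup>*x, x\<rangle> = -c |B\<^sup>*x|\<^sup>2\<close> is real only if \<open>B\<^sup>*x = 0\<close>.\<close>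

lemma adj_add_nonreal_smult_kernel_trivial:
  fixes A B :: "complex mat"
  assumes A: "A \<in> carrier_mat n n" and B: "B \<in> carrier_mat n n"
    and herm: "adj (A * adj B) = A * adj B"
    and trivial: "\<And>x. x \<in> carrier_vec n \<Longrightarrow> adj A *\<^sub>v x = 0\<^sub>v n \<Longrightarrow> adj B *\<^sub>v x = 0\<^sub>v n \<Longrightarrow> x = 0\<^sub>v n"
    and c: "Im c \<noteq> 0" and x: "x \<in> carrier_vec n"
    and ker: "adj (A + c \<cdot>\<^sub>m B) *\<^sub>v x = 0\<^sub>v n"
  shows "x = 0\<^sub>v n"
proof -
  define u where "u = adj B *\<^sub>v x"
  have u: "u \<in> carrier_vec n" using B x by (simp add: u_def)
  have Ax: "adj A *\<^sub>v x = - (cnj c \<cdot>\<^sub>v u)"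
    using ker adj_add_smult_mult_vec[OF A B x, of c] A B x
    by (simp add: u_def add_eq_zero_vec_iff[of _ n])
  have "(A * adj B *\<^sub>v x) \<bullet>c x = (A *\<^sub>v u) \<bullet>c x"
    using A B x by (simp add: u_def assoc_mult_mat_vec[of _ n n _ n])
  also have "\<dots> = u \<bullet>c (- (cnj c \<cdot>\<^sub>v u))"
    using cscalar_prod_adj[OF A u x] by (simp add: Ax)
  also have "\<dots> = - c * (u \<bullet>c u)"
    using u by (simp add: cscalar_prod_uminus_right cscalar_prod_smult_right)
  finally have "Im (- c * (u \<bullet>c u)) = 0"
    using hermitian_form_real[OF _ herm, of n x] A B x by simp
  then have "Re (u \<bullet>c u) = 0" using c cscalar_prod_self_real(1)[of u] by simp
  then have "u \<bullet>c u = 0" using cscalar_prod_self_real(1)[of u] by (simp add: complex_eq_iff)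
  then have "u = 0\<^sub>v n" using u by simp
  moreover from this have "adj A *\<^sub>v x = 0\<^sub>v n" using Ax by simp
  ultimately show ?thesis using trivial[OF x] by (simp add: u_def)
qed

text \<open>If \<open>A\<^sup>*\<phi> + iB\<^sup>*\<phi> = \<chi>\<^sub>2 - i\<chi>\<^sub>1\<close>, then \<open>u = \<chi>\<^sub>1 + B\<^sup>*\<phi>\<close> satisfies \<open>iu = \<chi>\<^sub>2 - A\<^sup>*\<phi>\<close>, so
  \<open>(A + iB) u = A\<chi>\<^sub>1 + B\<chi>\<^sub>2 = 0\<close> because \<open>AB\<^sup>* = BA\<^sup>*\<close>.\<close>

lemma boundary_relation_witness:
  fixes A B :: "complex mat"
  assumes A: "A \<in> carrier_mat n n" and B: "B \<in> carrier_mat n n"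
    and herm: "adj (A * adj B) = A * adj B"
    and inj: "\<And>z. z \<in> carrier_vec n \<Longrightarrow> (A + \<i> \<cdot>\<^sub>m B) *\<^sub>v z = 0\<^sub>v n \<Longrightarrow> z = 0\<^sub>v n"
    and \<chi>1: "\<chi>1 \<in> carrier_vec n" and \<chi>2: "\<chi>2 \<in> carrier_vec n" and \<phi>: "\<phi> \<in> carrier_vec n"
    and boundary: "A *\<^sub>v \<chi>1 + B *\<^sub>v \<chi>2 = 0\<^sub>v n"
    and \<phi>_eq: "adj A *\<^sub>v \<phi> + \<i> \<cdot>\<^sub>v (adj B *\<^sub>v \<phi>) = \<chi>2 + (- \<i>) \<cdot>\<^sub>v \<chi>1"
  shows "\<chi>1 = - (adj B *\<^sub>v \<phi>)" "\<chi>2 = adj A *\<^sub>v \<phi>"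
proof -
  define u where "u = \<chi>1 + adj B *\<^sub>v \<phi>"
  have u: "u \<in> carrier_vec n" using \<chi>1 B \<phi> by (simp add: u_def)
  have iu: "\<i> \<cdot>\<^sub>v u = \<chi>2 - adj A *\<^sub>v \<phi>"
  proof (rule eq_vecI)
    fix i assume "i < dim_vec (\<chi>2 - adj A *\<^sub>v \<phi>)"
    then have i: "i < n" using A by simp
    have "(adj A *\<^sub>v \<phi> + \<i> \<cdot>\<^sub>v (adj B *\<^sub>v \<phi>)) $ i = (\<chi>2 + (- \<i>) \<cdot>\<^sub>v \<chi>1) $ i"
      using \<phi>_eq by simp
    then show "(\<i> \<cdot>\<^sub>v u) $ i = (\<chi>2 - adj A *\<^sub>v \<phi>) $ i"
      using i A B \<chi>1 \<chi>2 \<phi> by (simp add: u_def algebra_simps)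
  qed (use u \<chi>2 A in simp)
  have AB\<phi>: "A *\<^sub>v (adj B *\<^sub>v \<phi>) = B *\<^sub>v (adj A *\<^sub>v \<phi>)"
    using hermitian_product_swap[OF A B herm] \<phi> A B
    by (simp flip: assoc_mult_mat_vec[of _ n n _ n])
  have "(A + \<i> \<cdot>\<^sub>m B) *\<^sub>v u = A *\<^sub>v u + B *\<^sub>v (\<i> \<cdot>\<^sub>v u)"
    using A B u by (simp add: add_mult_distrib_mat_vec[of _ n n] smult_mult_mat_vec mult_mat_vec)
  also have "\<dots> = A *\<^sub>v \<chi>1 + A *\<^sub>v (adj B *\<^sub>v \<phi>) + (B *\<^sub>v \<chi>2 - B *\<^sub>v (adj A *\<^sub>v \<phi>))"
    unfolding iu using A B \<chi>1 \<chi>2 \<phi>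
    by (simp add: u_def mult_add_distrib_mat_vec[of _ n n] mult_minus_distrib_mat_vec[of _ n n])
  also have "\<dots> = A *\<^sub>v \<chi>1 + B *\<^sub>v \<chi>2"
    unfolding AB\<phi> using A B \<chi>1 \<chi>2 \<phi> by (intro eq_vecI) auto
  finally have "u = 0\<^sub>v n" using inj[OF u] boundary by metis
  then show "\<chi>1 = - (adj B *\<^sub>v \<phi>)" using \<chi>1 B \<phi> by (simp add: u_def add_eq_zero_vec_iff[of _ n])
  show "\<chi>2 = adj A *\<^sub>v \<phi>"
    using iu \<open>u = 0\<^sub>v n\<close> \<chi>2 A \<phi> by (auto simp: vec_eq_iff)
qed

text \<open>The witness is \<open>\<phi> = (A\<^sup>* + iB\<^sup>*)\<^sup>-\<^sup>1 (\<chi>\<^sub>2 - i\<chi>\<^sub>1)\<close>; both \<open>A \<plusminus> iB\<close> are invertible.\<close>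

lemma boundary_relation_parametrisation:
  fixes A B :: "complex mat"
  assumes A: "A \<in> carrier_mat n n" and B: "B \<in> carrier_mat n n"
    and herm: "adj (A * adj B) = A * adj B"
    and trivial: "\<And>x. x \<in> carrier_vec n \<Longrightarrow> adj A *\<^sub>v x = 0\<^sub>v n \<Longrightarrow> adj B *\<^sub>v x = 0\<^sub>v n \<Longrightarrow> x = 0\<^sub>v n"
    and \<chi>1: "\<chi>1 \<in> carrier_vec n" and \<chi>2: "\<chi>2 \<in> carrier_vec n"
    and boundary: "A *\<^sub>v \<chi>1 + B *\<^sub>v \<chi>2 = 0\<^sub>v n"
  obtains \<phi> where "\<phi> \<in> carrier_vec n" "\<chi>1 = - (adj B *\<^sub>v \<phi>)" "\<chi>2 = adj A *\<^sub>v \<phi>"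
proof -
  define W where "W = A + (- \<i>) \<cdot>\<^sub>m B"
  have W: "W \<in> carrier_mat n n" using A B by (simp add: W_def)
  have nonreal: "Im (- \<i>) \<noteq> 0" "Im \<i> \<noteq> 0" by simp_all
  have adj_W_inj: "x = 0\<^sub>v n" if "x \<in> carrier_vec n" "adj W *\<^sub>v x = 0\<^sub>v n" for x
    by (rule adj_add_nonreal_smult_kernel_trivial[OF A B herm trivial nonreal(1) that(1) that(2)[unfolded W_def]])
  have inj: "z = 0\<^sub>v n" if "z \<in> carrier_vec n" "(A + \<i> \<cdot>\<^sub>m B) *\<^sub>v z = 0\<^sub>v n" for z
  proof (rule kernel_trivial_of_adj_kernel_trivial[OF _ _ that])
    show "x = 0\<^sub>v n" if "x \<in> carrier_vec n" "adj (A + \<i> \<cdot>\<^sub>m B) *\<^sub>v x = 0\<^sub>v n" for x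
      by (rule adj_add_nonreal_smult_kernel_trivial[OF A B herm trivial nonreal(2) that])
  qed (use A B in simp)
  obtain C where C: "C \<in> carrier_mat n n" "adj W * C = 1\<^sub>m n"
    using square_mat_invertible_of_kernel_trivial[OF adj_carrier[OF W] adj_W_inj] by blast
  define \<phi> where "\<phi> = C *\<^sub>v (\<chi>2 + (- \<i>) \<cdot>\<^sub>v \<chi>1)"
  have \<phi>: "\<phi> \<in> carrier_vec n" using C \<chi>1 \<chi>2 by (simp add: \<phi>_def)
  have "adj W *\<^sub>v \<phi> = \<chi>2 + (- \<i>) \<cdot>\<^sub>v \<chi>1"
    using assoc_mult_mat_vec[OF adj_carrier[OF W] C(1), of "\<chi>2 + (- \<i>) \<cdot>\<^sub>v \<chi>1"] C(2) \<chi>1 \<chi>2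
    by (simp add: \<phi>_def)
  then have "adj A *\<^sub>v \<phi> + \<i> \<cdot>\<^sub>v (adj B *\<^sub>v \<phi>) = \<chi>2 + (- \<i>) \<cdot>\<^sub>v \<chi>1"
    using adj_add_smult_mult_vec[OF A B \<phi>, of "- \<i>"] by (simp add: W_def)
  with boundary_relation_witness[OF A B herm inj \<chi>1 \<chi>2 \<phi> boundary] show ?thesis
    using that \<phi> by blast
qed

section \<open>Hermitian matrices without positive eigenvalues\<close>

lemma orthonormal_basis_completion:
  fixes u :: "complex vec"
  assumes u: "u \<in> carrier_vec n" and uu: "u \<bullet>c u = 1"
  obtains ws where "length ws = n" "set ws \<subseteq> carrier_vec n" "ws ! 0 = u"
    "\<And>i j. i < n \<Longrightarrow> j < n \<Longrightarrow> ws ! i \<bullet>c ws ! j = (if i = j then 1 else 0)"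
proof -
  have u0: "u \<noteq> 0\<^sub>v n" using uu u by auto
  interpret cof_vec_space n "TYPE(complex)" .
  define nrm :: "complex vec \<Rightarrow> complex vec"
    where "nrm w = of_real (1 / sqrt (Re (w \<bullet>c w))) \<cdot>\<^sub>v w" for w
  have nrm_unit: "nrm w \<bullet>c nrm w = 1" if "w \<bullet>c w \<noteq> 0" for w
    unfolding nrm_def by (rule cscalar_prod_normalize[OF that])
  have nrm_orth: "nrm v \<bullet>c nrm w = 0" if "v \<bullet>c w = 0" "dim_vec v = dim_vec w" for v w
    unfolding nrm_def by (subst cscalar_prod_smult_both) (simp_all add: that)
  obtain b where b: "distinct b" "\<not> lin_dep (set b)" "set b \<subseteq> carrier_vec n" "length b = n" "hd b = u"
    using basis_completion[OF u u0] by blast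
  then obtain vs where b_u: "b = u # vs" by (cases b) (use u0 u in auto)
  define ws where "ws = gram_schmidt n b"
  have ws: "corthogonal ws" "set ws \<subseteq> carrier_vec n" "length ws = n"
    using gram_schmidt_result[OF b(3,1,2) ws_def] b(4) by auto
  have ws_i: "ws ! i \<in> carrier_vec n" if "i < n" for i using ws(2,3) that by auto
  have "map nrm ws ! i \<bullet>c map nrm ws ! j = (if i = j then 1 else 0)" if ij: "i < n" "j < n" for i j
  proof (cases "i = j")
    case True
    then have "ws ! i \<bullet>c ws ! i \<noteq> 0" using corthogonalD[OF ws(1)] ij ws(3) by auto
    then show ?thesis using True ij ws(3) nrm_unit by simp
  next
    case False
    then have "ws ! i \<bullet>c ws ! j = 0" using corthogonalD[OF ws(1)] ij ws(3) by auto
    then show ?thesis using False ij ws(3) ws_i[OF ij(1)] ws_i[OF ij(2)] nrm_orth by simp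
  qed
  moreover have "ws ! 0 = u" using gram_schmidt_hd[OF u, of vs] ws(3) u0 b(4)
    by (cases ws) (auto simp: ws_def b_u)
  then have "map nrm ws ! 0 = u" using uu ws(3) u0 u by (cases n) (auto simp: nrm_def)
  moreover have "set (map nrm ws) \<subseteq> carrier_vec n" using ws(2) by (auto simp: nrm_def)
  ultimately show ?thesis using that[of "map nrm ws"] ws(3) by simp
qed

lemma unitary_completion:
  assumes u: "u \<in> carrier_vec n" and uu: "u \<bullet>c u = 1"
  obtains U where "U \<in> carrier_mat n n" "adj U * U = 1\<^sub>m n" "U * adj U = 1\<^sub>m n" "col U 0 = u"
proof -
  obtain ws where ws: "length ws = n" "set ws \<subseteq> carrier_vec n" "ws ! 0 = u"
    and orthonormal: "\<And>i j. i < n \<Longrightarrow> j < n \<Longrightarrow> ws ! i \<bullet>c ws ! j = (if i = j then 1 else 0)"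
    using orthonormal_basis_completion[OF u uu] by blast
  define U where "U = mat_of_cols n ws"
  have U: "U \<in> carrier_mat n n" using mat_of_cols_carrier(1)[of n ws] ws(1) by (simp add: U_def)
  have UU: "adj U * U = 1\<^sub>m n"
  proof (rule eq_matI)
    fix i j assume "i < dim_row (1\<^sub>m n)" "j < dim_col (1\<^sub>m n)"
    then have ij: "i < n" "j < n" by auto
    have "(adj U * U) $$ (i, j) = (\<Sum>k<n. ws ! j $ k * cnj (ws ! i $ k))"
      using U ij ws(1) by (auto simp: scalar_prod_def lessThan_atLeast0 U_def mat_of_cols_def mult.commute intro!: sum.cong)
    also have "\<dots> = ws ! j \<bullet>c ws ! i"
      using ij ws(1,2) nth_mem[of i ws] nth_mem[of j ws] by (subst cscalar_prod_as_sum[of _ n]) auto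
    finally show "(adj U * U) $$ (i, j) = 1\<^sub>m n $$ (i, j)" using orthonormal[OF ij(2,1)] ij by auto
  qed (use U in auto)
  moreover have "U * adj U = 1\<^sub>m n" by (rule mat_mult_left_right_inverse[OF adj_carrier[OF U] U UU])
  moreover have "u \<noteq> 0\<^sub>v n" using u uu by auto
  then have "0 < n" using u by (cases n) auto
  then have "col U 0 = u" using u ws by (simp add: U_def col_mat_of_cols)
  ultimately show ?thesis using that U by blast
qed

lemma unitary_conj_similar:
  assumes U: "U \<in> carrier_mat n n" and UU: "adj U * U = 1\<^sub>m n" "U * adj U = 1\<^sub>m n"
    and H: "H \<in> carrier_mat n n"
  shows "similar_mat H (adj U * H * U)"
proof (rule similar_matI[of H "adj U * H * U" U "adj U" n])
  have HU: "H * U \<in> carrier_mat n n" using H U by simp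
  have "U * (adj U * H * U) * adj U = U * (adj U * (H * U)) * adj U"
    by (simp add: assoc_mult_mat[OF adj_carrier[OF U] H U])
  also have "U * (adj U * (H * U)) = (U * adj U) * (H * U)"
    by (rule assoc_mult_mat[OF U adj_carrier[OF U] HU, symmetric])
  also have "\<dots> * adj U = H * (U * adj U)"
    using UU HU H U by (simp add: assoc_mult_mat[OF H U adj_carrier[OF U]])
  finally show "H = U * (adj U * H * U) * adj U" using UU H by simp
qed (use U UU H in auto)

lemma unitary_conj_hermitian:
  assumes U: "U \<in> carrier_mat n n" and H: "H \<in> carrier_mat n n" and herm: "adj H = H"
  shows "adj (adj U * H * U) = adj U * H * U"
proof -
  have "adj (adj U * H * U) = adj U * adj (adj U * H)"
    using U H by (intro adj_mult) auto
  also have "adj (adj U * H) = H * U" using adj_mult[OF adj_carrier[OF U] H] herm by simp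
  also have "adj U * (H * U) = adj U * H * U" using U H by (intro assoc_mult_mat[symmetric]) auto
  finally show ?thesis .
qed

text \<open>The first row vanishes off the diagonal because the matrix is Hermitian.\<close>

lemma hermitian_first_col_block:
  fixes D :: "complex mat"
  assumes D: "D \<in> carrier_mat (Suc m) (Suc m)" and herm: "adj D = D"
    and col0: "\<And>i. i < Suc m \<Longrightarrow> D $$ (i, 0) = (if i = 0 then e else 0)"
  obtains H' where "H' \<in> carrier_mat m m" "adj H' = H'"
    and "D = four_block_mat (mat 1 1 (\<lambda>_. e)) (0\<^sub>m 1 m) (0\<^sub>m m 1) H'"
proof -
  have row0: "D $$ (0, j) = (if j = 0 then e else 0)" if "j < Suc m" for j
  proof -
    have "D $$ (0, j) = cnj (D $$ (j, 0))"
      using arg_cong[OF herm, of "\<lambda>M. M $$ (0, j)"] that D by simp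
    then show ?thesis using col0[OF that] col0[of 0] by (auto simp: complex_eq_iff)
  qed
  define H' where "H' = mat m m (\<lambda>(i, j). D $$ (Suc i, Suc j))"
  have "adj H' = H'"
  proof (rule eq_matI)
    fix i j assume "i < dim_row H'" "j < dim_col H'"
    then show "adj H' $$ (i, j) = H' $$ (i, j)"
      using arg_cong[OF herm, of "\<lambda>M. M $$ (Suc i, Suc j)"] D by (simp add: H'_def)
  qed (auto simp: H'_def)
  moreover have "D = four_block_mat (mat 1 1 (\<lambda>_. e)) (0\<^sub>m 1 m) (0\<^sub>m m 1) H'"
  proof (rule eq_matI)
    fix i j assume "i < dim_row (four_block_mat (mat 1 1 (\<lambda>_. e)) (0\<^sub>m 1 m) (0\<^sub>m m 1) H')"
      "j < dim_col (four_block_mat (mat 1 1 (\<lambda>_. e)) (0\<^sub>m 1 m) (0\<^sub>m m 1) H')"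
    then show "D $$ (i, j) = four_block_mat (mat 1 1 (\<lambda>_. e)) (0\<^sub>m 1 m) (0\<^sub>m m 1) H' $$ (i, j)"
      using col0[of i] row0[of j] by (auto simp: H'_def)
  qed (use D in \<open>auto simp: H'_def\<close>)
  moreover have "H' \<in> carrier_mat m m" by (simp add: H'_def)
  ultimately show ?thesis using that by blast
qed

lemma hermitian_deflation:
  fixes H :: "complex mat"
  assumes H: "H \<in> carrier_mat (Suc m) (Suc m)" and herm: "adj H = H"
    and u: "u \<in> carrier_vec (Suc m)" "u \<bullet>c u = 1" and Hu: "H *\<^sub>v u = e \<cdot>\<^sub>v u"
  obtains U H' where "U \<in> carrier_mat (Suc m) (Suc m)" "adj U * U = 1\<^sub>m (Suc m)" "U * adj U = 1\<^sub>m (Suc m)"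
    and "H' \<in> carrier_mat m m" "adj H' = H'"
    and "adj U * H * U = four_block_mat (mat 1 1 (\<lambda>_. e)) (0\<^sub>m 1 m) (0\<^sub>m m 1) H'"
proof -
  obtain U where U: "U \<in> carrier_mat (Suc m) (Suc m)" and UU: "adj U * U = 1\<^sub>m (Suc m)" "U * adj U = 1\<^sub>m (Suc m)"
    and U0: "col U 0 = u"
    using unitary_completion[OF u] by blast
  have D: "adj U * H * U \<in> carrier_mat (Suc m) (Suc m)" using U H by (auto intro!: mult_carrier_mat)
  have "col (adj U * H * U) 0 = (adj U * H) *\<^sub>v col U 0"
    using U H by (intro col_mult2) auto
  also have "\<dots> = adj U *\<^sub>v (H *\<^sub>v u)"
    unfolding U0 using U H u by (intro assoc_mult_mat_vec) auto
  also have "\<dots> = e \<cdot>\<^sub>v col (adj U * U) 0"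
    using U u col_mult2[OF adj_carrier[OF U] U, of 0] mult_mat_vec[OF adj_carrier[OF U] u(1)] by (simp add: Hu U0)
  finally have col0: "col (adj U * H * U) 0 = e \<cdot>\<^sub>v unit_vec (Suc m) 0" by (simp add: UU)
  have "(adj U * H * U) $$ (i, 0) = (if i = 0 then e else 0)" if "i < Suc m" for i
    using arg_cong[OF col0, of "\<lambda>v. v $ i"] that D by auto
  from hermitian_first_col_block[OF D unitary_conj_hermitian[OF U H herm] this]
  show ?thesis using that[OF U UU] by blast
qed

lemma unitary_conj_form:
  assumes U: "U \<in> carrier_mat n n" "U * adj U = 1\<^sub>m n" and H: "H \<in> carrier_mat n n"
    and x: "x \<in> carrier_vec n"
  shows "(H *\<^sub>v x) \<bullet>c x = ((adj U * H * U) *\<^sub>v (adj U *\<^sub>v x)) \<bullet>c (adj U *\<^sub>v x)"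
proof -
  define z where "z = adj U *\<^sub>v x"
  have z: "z \<in> carrier_vec n" using U x by (simp add: z_def)
  have "x = U *\<^sub>v z"
    using assoc_mult_mat_vec[OF U(1) adj_carrier[OF U(1)] x] U(2) x by (simp add: z_def)
  then have "(H *\<^sub>v x) \<bullet>c x = (adj U *\<^sub>v (H *\<^sub>v (U *\<^sub>v z))) \<bullet>c z"
    using cscalar_prod_adj[OF adj_carrier[OF U(1)], of "H *\<^sub>v (U *\<^sub>v z)" z] H U z by simp
  also have "adj U *\<^sub>v (H *\<^sub>v (U *\<^sub>v z)) = (adj U * H * U) *\<^sub>v z"
    using assoc_mult_mat_vec[OF mult_carrier_mat[OF adj_carrier[OF U(1)] H] U(1) z]
      assoc_mult_mat_vec[OF adj_carrier[OF U(1)] H, of "U *\<^sub>v z"] U H z by simp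
  finally show ?thesis by (simp add: z_def)
qed

lemma block_diag_form:
  fixes H' :: "complex mat"
  assumes H': "H' \<in> carrier_mat m m" and z1: "z1 \<in> carrier_vec 1" and z2: "z2 \<in> carrier_vec m"
  shows "(four_block_mat (mat 1 1 (\<lambda>_. e)) (0\<^sub>m 1 m) (0\<^sub>m m 1) H' *\<^sub>v (z1 @\<^sub>v z2)) \<bullet>c (z1 @\<^sub>v z2)
    = e * (z1 \<bullet>c z1) + (H' *\<^sub>v z2) \<bullet>c z2"
proof -
  have "four_block_mat (mat 1 1 (\<lambda>_. e)) (0\<^sub>m 1 m) (0\<^sub>m m 1) H' *\<^sub>v (z1 @\<^sub>v z2)
      = mat 1 1 (\<lambda>_. e) *\<^sub>v z1 @\<^sub>v H' *\<^sub>v z2"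
    by (rule mult_mat_vec_split[OF _ H' z1 z2]) simp
  also have "mat 1 1 (\<lambda>_. e) *\<^sub>v z1 = e \<cdot>\<^sub>v z1"
    using z1 by (intro eq_vecI) (auto simp: scalar_prod_def)
  also have "(e \<cdot>\<^sub>v z1 @\<^sub>v H' *\<^sub>v z2) \<bullet>c (z1 @\<^sub>v z2) = (e \<cdot>\<^sub>v z1) \<bullet>c z1 + (H' *\<^sub>v z2) \<bullet>c z2"
    by (rule cscalar_prod_append) (use H' z1 z2 in auto)
  finally show ?thesis using z1 by (simp add: cscalar_prod_smult_left)
qed

lemma unit_eigenvector_exists:
  fixes H :: "complex mat"
  assumes H: "H \<in> carrier_mat (Suc m) (Suc m)"
  obtains e u where "poly (char_poly H) e = 0" "u \<in> carrier_vec (Suc m)" "u \<bullet>c u = 1" "H *\<^sub>v u = e \<cdot>\<^sub>v u"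
proof -
  obtain es where es: "char_poly H = (\<Prod>a\<leftarrow>es. [:- a, 1:])" "length es = Suc m"
    using char_poly_factorized[OF H] by blast
  then obtain e es' where "es = e # es'" by (cases es) auto
  then have root: "poly (char_poly H) e = 0" using es(1) by simp
  then obtain v where v: "v \<in> carrier_vec (Suc m)" "v \<noteq> 0\<^sub>v (Suc m)" "H *\<^sub>v v = e \<cdot>\<^sub>v v"
    using eigenvalue_root_char_poly[OF H] H unfolding eigenvalue_def eigenvector_def by auto
  define c :: complex where "c = of_real (1 / sqrt (Re (v \<bullet>c v)))"
  have unit: "(c \<cdot>\<^sub>v v) \<bullet>c (c \<cdot>\<^sub>v v) = 1"
    unfolding c_def using v by (intro cscalar_prod_normalize) simp
  have "H *\<^sub>v (c \<cdot>\<^sub>v v) = e \<cdot>\<^sub>v (c \<cdot>\<^sub>v v)"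
    using mult_mat_vec[OF H v(1)] v(3) by (simp add: smult_smult_assoc mult.commute)
  from that[OF root _ unit this] v(1) show ?thesis by simp
qed

lemma hermitian_form_nonpos:
  fixes H :: "complex mat"
  assumes "H \<in> carrier_mat n n" "adj H = H" "\<And>e. poly (char_poly H) e = 0 \<Longrightarrow> Re e \<le> 0"
    and "x \<in> carrier_vec n"
  shows "Re ((H *\<^sub>v x) \<bullet>c x) \<le> 0"
  using assms
proof (induction n arbitrary: H x)
  case 0
  then show ?case by (simp add: scalar_prod_def)
next
  case (Suc m)
  note H = Suc.prems(1) and x = Suc.prems(4)
  obtain e u where e: "poly (char_poly H) e = 0"
    and u: "u \<in> carrier_vec (Suc m)" "u \<bullet>c u = 1" "H *\<^sub>v u = e \<cdot>\<^sub>v u"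
    using unit_eigenvector_exists[OF H] by blast
  define E where "E = mat 1 1 (\<lambda>_. e)"
  have E: "E \<in> carrier_mat 1 1" by (simp add: E_def)
  obtain U H' where U: "U \<in> carrier_mat (Suc m) (Suc m)" "adj U * U = 1\<^sub>m (Suc m)" "U * adj U = 1\<^sub>m (Suc m)"
    and H': "H' \<in> carrier_mat m m" "adj H' = H'"
    and D: "adj U * H * U = four_block_mat E (0\<^sub>m 1 m) (0\<^sub>m m 1) H'"
    using hermitian_deflation[OF H Suc.prems(2) u] unfolding E_def by blast
  have "char_poly H = char_poly (adj U * H * U)"
    by (rule char_poly_similar[OF unitary_conj_similar[OF U H]])
  also have "\<dots> = char_poly E * char_poly H'"
    using char_poly_factorized[OF E] char_poly_factorized[OF H'(1)]
    by (intro char_poly_0_block[OF D _ _ E _ H'(1)]) auto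
  finally have "poly (char_poly H') \<mu> = 0 \<Longrightarrow> poly (char_poly H) \<mu> = 0" for \<mu> by simp
  then have IH: "Re ((H' *\<^sub>v y) \<bullet>c y) \<le> 0" if "y \<in> carrier_vec m" for y
    using Suc.IH[OF H' _ that] Suc.prems(3) by blast
  have "adj U *\<^sub>v x \<in> carrier_vec (1 + m)" using U x by simp
  then obtain z1 z2 where z: "adj U *\<^sub>v x = z1 @\<^sub>v z2" "z1 \<in> carrier_vec 1" "z2 \<in> carrier_vec m"
    by (metis vec_first_last_append vec_first_carrier vec_last_carrier)
  have "(H *\<^sub>v x) \<bullet>c x = e * (z1 \<bullet>c z1) + (H' *\<^sub>v z2) \<bullet>c z2"
    using unitary_conj_form[OF U(1,3) H x] block_diag_form[OF H'(1) z(2,3)] by (simp add: D E_def z(1))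
  then have "Re ((H *\<^sub>v x) \<bullet>c x) = Re e * Re (z1 \<bullet>c z1) + Re ((H' *\<^sub>v z2) \<bullet>c z2)"
    using cscalar_prod_self_real(1)[of z1] by simp
  also have "\<dots> \<le> 0"
    using Suc.prems(3)[OF e] cscalar_prod_self_real(2)[of z1] IH[OF z(3)]
    by (simp add: add_nonpos_nonpos mult_nonpos_nonneg)
  finally show ?case .
qed

lemma hermitian_char_poly_root_real:
  fixes H :: "complex mat"
  assumes H: "H \<in> carrier_mat n n" and herm: "adj H = H" and root: "poly (char_poly H) e = 0"
  shows "Im e = 0"
proof -
  obtain v where v: "v \<in> carrier_vec n" "v \<noteq> 0\<^sub>v n" "H *\<^sub>v v = e \<cdot>\<^sub>v v"
    using root eigenvalue_root_char_poly[OF H] H unfolding eigenvalue_def eigenvector_def by auto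
  have "e * (v \<bullet>c v) = (H *\<^sub>v v) \<bullet>c v" using v by (simp add: cscalar_prod_smult_left)
  also have "\<dots> = v \<bullet>c (H *\<^sub>v v)" using cscalar_prod_adj[OF H v(1) v(1)] herm by simp
  also have "\<dots> = cnj e * (v \<bullet>c v)" using v by (simp add: cscalar_prod_smult_right)
  finally have "e = cnj e" using v by simp
  then show ?thesis by (metis cnj.sel(2) neg_equal_zero)
qed

lemma n_plus_zero_char_poly_root_nonpos:
  fixes H :: "complex mat"
  assumes H: "H \<in> carrier_mat n n" and herm: "adj H = H" and n_plus: "n_plus H = 0"
    and root: "poly (char_poly H) e = 0"
  shows "Re e \<le> 0"
proof (rule ccontr)
  assume pos: "\<not> Re e \<le> 0"
  let ?P = "{k. eigenvalue H k \<and> Im k = 0 \<and> Re k > 0}"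
  have cp: "char_poly H \<noteq> 0" using degree_monic_char_poly[OF H] by auto
  have "?P \<subseteq> {k. poly (char_poly H) k = 0}" using eigenvalue_root_char_poly[OF H] by auto
  then have "finite ?P" using poly_roots_finite[OF cp] finite_subset by blast
  moreover have "e \<in> ?P"
    using root pos hermitian_char_poly_root_real[OF H herm root] eigenvalue_root_char_poly[OF H] by auto
  ultimately have "Polynomial.order e (char_poly H) \<le> n_plus H"
    unfolding n_plus_def by (intro member_le_sum) auto
  moreover have "Polynomial.order e (char_poly H) \<noteq> 0" using root cp order_root by blast
  ultimately show False using n_plus by simp
qed

lemma kernel_dim_le_n_zero:
  fixes H :: "complex mat"
  assumes H: "H \<in> carrier_mat n n"
  shows "kernel_dim H \<le> n_zero H"
proof -
  obtain es where "char_poly H = (\<Prod>a\<leftarrow>es. [:- a, 1:])" using char_poly_factorized[OF H] by auto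
  from jordan_nf_exists[OF H this] obtain n_as where jnf: "jordan_nf H n_as" by auto
  have "char_matrix H 0 ^\<^sub>m 1 = H" using H by (auto simp: char_matrix_def)
  then have "kernel_dim H = dim_gen_eigenspace H 0 1" by (simp add: dim_gen_eigenspace_def)
  also have "\<dots> = (\<Sum>k\<leftarrow>map fst [(k, e)\<leftarrow>n_as . e = 0]. min 1 k)" by (rule dim_gen_eigenspace[OF jnf])
  also have "\<dots> \<le> sum_list (map fst [(k, e)\<leftarrow>n_as . e = 0])" by (induct n_as) auto
  also have "\<dots> = Polynomial.order 0 (char_poly H)" unfolding jordan_nf_order[OF jnf] by (induct n_as) auto
  also have "\<dots> = n_zero H"
    using eigenvalue_root_char_poly[OF H, of 0] by (auto simp: n_zero_def order_root)
  finally show ?thesis .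
qed

lemma mat_kernel_coordinates:
  fixes H :: "complex mat"
  assumes H: "H \<in> carrier_mat n n"
  obtains Bs where "finite Bs" "Bs \<subseteq> mat_kernel H" "card Bs = kernel_dim H"
    "\<And>v. v \<in> mat_kernel H \<Longrightarrow> \<exists>\<alpha>. \<forall>i<n. v $ i = (\<Sum>b\<in>Bs. \<alpha> b * b $ i)"
proof -
  interpret K: kernel n n H by (unfold_locales, rule H)
  obtain Bs where Bs: "finite Bs" "K.basis Bs" using kernel_basis_exists[OF H] by auto
  have sub: "Bs \<subseteq> mat_kernel H" and span: "K.span Bs = mat_kernel H"
    using Bs(2) unfolding K.Ker.basis_def by auto
  have "card Bs = kernel_dim H" using K.Ker.dim_basis[OF Bs] by simp
  moreover have "\<exists>\<alpha>. \<forall>i<n. v $ i = (\<Sum>b\<in>Bs. \<alpha> b * b $ i)" if v: "v \<in> mat_kernel H" for v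
  proof -
    obtain \<alpha> where "K.lincomb \<alpha> Bs = v" using K.Ker.finite_in_span[OF Bs(1)] sub span v by auto
    then show ?thesis using K.lincomb_index[OF _ sub] by auto
  qed
  ultimately show ?thesis using that Bs(1) sub by blast
qed

section \<open>Kernel functions on the metric graph\<close>

lemma affine_of_second_derivative_zero:
  fixes f f1 f2 :: "real \<Rightarrow> complex"
  assumes I: "\<And>x. x \<in> I \<Longrightarrow> 0 \<le> x \<and> {0..x} \<subseteq> I"
    and f: "\<And>x. x \<in> I \<Longrightarrow> f x = f 0 + (LBINT t:{0..x}. f1 t)"
    and f1: "\<And>x. x \<in> I \<Longrightarrow> f1 x = f1 0 + (LBINT t:{0..x}. f2 t)"
    and f2: "AE x in lborel. x \<in> I \<longrightarrow> f2 x = 0"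
    and x: "x \<in> I"
  shows "f1 x = f1 0" "f x = f 0 + of_real x * f1 0"
proof -
  have f1_const: "f1 y = f1 0" if y: "y \<in> I" for y
  proof -
    have "AE t in lborel. indicator {0..y} t *\<^sub>R f2 t = 0"
      using f2 by eventually_elim (use I[OF y] in \<open>auto simp: indicator_def\<close>)
    then have "(LBINT t:{0..y}. f2 t) = 0" unfolding set_lebesgue_integral_def by (rule integral_eq_zero_AE)
    then show ?thesis using f1[OF y] by simp
  qed
  then show "f1 x = f1 0" using x .
  have x0: "0 \<le> x" and sub: "{0..x} \<subseteq> I" using I[OF x] by auto
  have "(LBINT t:{0..x}. f1 t) = (LBINT t:{0..x}. f1 0)"
    by (rule set_lebesgue_integral_cong) (use sub f1_const in auto)
  also have "\<dots> = of_real x * f1 0"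
    using x0 by (simp add: set_integral_const measure_def scaleR_conv_of_real)
  finally show "f x = f 0 + of_real x * f1 0" using f[OF x] by simp
qed

lemma integrable_not_bounded_below_halfline:
  fixes g :: "real \<Rightarrow> real"
  assumes int: "integrable lborel g" and nonneg: "\<And>x. 0 \<le> g x"
    and \<epsilon>: "\<epsilon> > 0" and bound: "\<And>x. X \<le> x \<Longrightarrow> \<epsilon> \<le> g x"
  shows False
proof -
  have "\<epsilon> * r \<le> integral\<^sup>L lborel g" if r: "0 \<le> r" for r
  proof -
    have "\<epsilon> * r = integral\<^sup>L lborel (\<lambda>x. \<epsilon> * indicator {X..X + r} x)" using r by simp
    also have "\<dots> \<le> integral\<^sup>L lborel g"
    proof (rule integral_mono[OF _ int])
      show "integrable lborel (\<lambda>x. \<epsilon> * indicator {X..X + r} x)"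
        using r by (intro integrable_mult_right integrable_real_indicator) auto
      show "\<epsilon> * indicator {X..X + r} x \<le> g x" for x
        using bound[of x] nonneg[of x] by (auto simp: indicator_def)
    qed
    finally show ?thesis .
  qed
  from this[of "(integral\<^sup>L lborel g + 1) / \<epsilon>"] \<epsilon>
  have "integral\<^sup>L lborel g + 1 \<le> integral\<^sup>L lborel g"
    using integral_nonneg_AE[of g lborel] nonneg by simp
  then show False by simp
qed

lemma square_integrable_affine_halfline_zero:
  fixes f :: "real \<Rightarrow> complex"
  assumes int: "integrable lborel (\<lambda>x. indicator {0..} x *\<^sub>R (cmod (f x))\<^sup>2)"
    and affine: "\<And>x. 0 \<le> x \<Longrightarrow> f x = c + of_real x * d"
  shows "c = 0" "d = 0"
proof -
  have "c = 0 \<and> d = 0"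
  proof (rule ccontr)
    assume nz: "\<not> (c = 0 \<and> d = 0)"
    obtain X \<epsilon> where X: "0 \<le> X" and \<epsilon>: "\<epsilon> > 0" and bound: "\<And>x. X \<le> x \<Longrightarrow> \<epsilon> \<le> (cmod (f x))\<^sup>2"
    proof (cases "d = 0")
      case True
      then show ?thesis using that[of 0 "(cmod c)\<^sup>2"] nz affine by auto
    next
      case False
      have "1 \<le> (cmod (f x))\<^sup>2" if x: "(cmod c + 1) / cmod d \<le> x" for x
      proof -
        have "0 \<le> (cmod c + 1) / cmod d" by simp
        then have x0: "0 \<le> x" using x by linarith
        have "cmod c + 1 \<le> cmod (of_real x * d)" using x x0 False by (simp add: field_simps norm_mult)
        also have "\<dots> \<le> cmod (c + of_real x * d) + cmod c" by (metis add_diff_cancel_left' norm_triangle_ineq4 add.commute)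
        finally show ?thesis using affine[OF x0] by (simp add: one_le_power)
      qed
      then show ?thesis using that[of "(cmod c + 1) / cmod d" 1] by auto
    qed
    show False
      by (rule integrable_not_bounded_below_halfline[OF int _ \<epsilon>, of X]) (use X bound in auto)
  qed
  then show "c = 0" "d = 0" by auto
qed

definition affine_edge_fun ::
    "nat \<Rightarrow> (nat \<Rightarrow> real) \<Rightarrow> (nat \<Rightarrow> complex) \<Rightarrow> (nat \<Rightarrow> complex) \<Rightarrow> edge \<Rightarrow> real \<Rightarrow> complex" where
  "affine_edge_fun nI a c d = (\<lambda>j x. case j of
      Inl e \<Rightarrow> 0
    | Inr i \<Rightarrow> if i < nI \<and> x \<in> {0..a i} then c i + of_real x * d i else 0)"

lemma Delta_ker_edge_affine:
  assumes dom: "in_dom nE nI a \<psi> \<psi>1 \<psi>2"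
    and \<psi>2: "\<forall>j\<in>edges nE nI. AE x in lborel. x \<in> edge_interval a j \<longrightarrow> \<psi>2 j x = 0"
    and j: "j \<in> edges nE nI" and x: "x \<in> edge_interval a j"
  shows "\<psi>1 j x = \<psi>1 j 0" "\<psi> j x = \<psi> j 0 + of_real x * \<psi>1 j 0"
proof -
  have "x \<in> edge_interval a j \<Longrightarrow> 0 \<le> x \<and> {0..x} \<subseteq> edge_interval a j" for x
    by (auto simp: edge_interval_def split: sum.splits)
  moreover have "\<forall>x\<in>edge_interval a j. \<psi> j x = \<psi> j 0 + (LBINT t:{0..x}. \<psi>1 j t) \<and>
      \<psi>1 j x = \<psi>1 j 0 + (LBINT t:{0..x}. \<psi>2 j t)"
    using dom j unfolding in_dom_def by blast
  ultimately show "\<psi>1 j x = \<psi>1 j 0" "\<psi> j x = \<psi> j 0 + of_real x * \<psi>1 j 0"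
    using affine_of_second_derivative_zero[of "edge_interval a j" "\<psi> j" "\<psi>1 j" "\<psi>2 j" x] \<psi>2 j x by auto
qed

lemma Delta_ker_external_edge_zero:
  assumes dom: "in_dom nE nI a \<psi> \<psi>1 \<psi>2"
    and \<psi>2: "\<forall>j\<in>edges nE nI. AE x in lborel. x \<in> edge_interval a j \<longrightarrow> \<psi>2 j x = 0"
    and e: "e < nE"
  shows "\<psi> (Inl e) 0 = 0" "\<psi>1 (Inl e) 0 = 0"
proof -
  have je: "Inl e \<in> edges nE nI" using e by (simp add: edges_def)
  have "L2_on (edge_interval a (Inl e)) (\<psi> (Inl e))" using dom je unfolding in_dom_def by blast
  then have "integrable lborel (\<lambda>x. indicator {0..} x *\<^sub>R (cmod (\<psi> (Inl e) x))\<^sup>2)"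
    by (simp add: L2_on_def set_integrable_def edge_interval_def)
  moreover have "\<psi> (Inl e) x = \<psi> (Inl e) 0 + of_real x * \<psi>1 (Inl e) 0" if "0 \<le> x" for x
    using Delta_ker_edge_affine(2)[OF dom \<psi>2 je, of x] that by (simp add: edge_interval_def)
  ultimately show "\<psi> (Inl e) 0 = 0" "\<psi>1 (Inl e) 0 = 0"
    using square_integrable_affine_halfline_zero by blast+
qed

text \<open>The derivative is represented by \<open>affine_edge_fun nI a d (\<lambda>_. 0)\<close>, the edgewise constant
  function with the slopes as values; only its boundary values enter.\<close>

lemma Delta_ker_affine:
  assumes a: "\<And>i. i < nI \<Longrightarrow> 0 \<le> a i" and \<psi>: "\<psi> \<in> Delta_ker nE nI a A B"
  obtains c d where "\<psi> = affine_edge_fun nI a c d"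
    "A *\<^sub>v bval nE nI a \<psi> + B *\<^sub>v bder nE nI a (affine_edge_fun nI a d (\<lambda>_. 0)) = 0\<^sub>v (nE + 2 * nI)"
proof -
  from \<psi> obtain \<psi>1 \<psi>2 where dom: "in_dom nE nI a \<psi> \<psi>1 \<psi>2"
    and boundary: "A *\<^sub>v bval nE nI a \<psi> + B *\<^sub>v bder nE nI a \<psi>1 = 0\<^sub>v (nE + 2 * nI)"
    and \<psi>2: "\<forall>j\<in>edges nE nI. AE x in lborel. x \<in> edge_interval a j \<longrightarrow> \<psi>2 j x = 0"
    unfolding Delta_ker_def by blast
  note affine = Delta_ker_edge_affine[OF dom \<psi>2] and external = Delta_ker_external_edge_zero[OF dom \<psi>2]
  have outside: "\<psi> j x = 0" if "j \<in> edges nE nI" "x \<notin> edge_interval a j" for j x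
    using dom that unfolding in_dom_def by blast
  have off_graph: "\<psi> j x = 0" if "j \<notin> edges nE nI" for j x
    using dom that unfolding in_dom_def by auto
  define c where "c i = \<psi> (Inr i) 0" for i
  define d where "d i = \<psi>1 (Inr i) 0" for i
  have "\<psi> j x = affine_edge_fun nI a c d j x" for j x
  proof (cases "j \<in> edges nE nI")
    case True
    then consider e where "j = Inl e" "e < nE" | i where "j = Inr i" "i < nI"
      by (auto simp: edges_def)
    then show ?thesis
    proof cases
      case 1
      then show ?thesis
        using affine(2)[OF True, of x] outside[OF True, of x] external[of e]
        by (cases "0 \<le> x") (auto simp: affine_edge_fun_def edge_interval_def)
    next
      case 2
      then show ?thesis
        using affine(2)[OF True, of x] outside[OF True, of x]
        by (cases "x \<in> {0..a i}") (auto simp: affine_edge_fun_def edge_interval_def c_def d_def)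
    qed
  qed (auto simp: off_graph affine_edge_fun_def edges_def split: sum.splits)
  then have "\<psi> = affine_edge_fun nI a c d" by (intro ext)
  moreover have "bder nE nI a \<psi>1 = bder nE nI a (affine_edge_fun nI a d (\<lambda>_. 0))"
  proof (rule eq_vecI)
    fix k assume k: "k < dim_vec (bder nE nI a (affine_edge_fun nI a d (\<lambda>_. 0)))"
    have ends: "0 \<in> edge_interval a (Inr i)" "a i \<in> edge_interval a (Inr i)" if "i < nI" for i
      using a[OF that] by (auto simp: edge_interval_def)
    have Inr_edge: "Inr i \<in> edges nE nI" if "i < nI" for i using that by (simp add: edges_def)
    show "bder nE nI a \<psi>1 $ k = bder nE nI a (affine_edge_fun nI a d (\<lambda>_. 0)) $ k"
      using k external(2)[of k] ends[of "k - nE"] ends[of "k - nE - nI"]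
        affine(1)[OF Inr_edge ends(2), of "k - nE - nI"] a[of "k - nE"] a[of "k - nE - nI"]
      by (auto simp: bder_def affine_edge_fun_def d_def)
  qed (simp add: bder_def)
  ultimately show ?thesis using that boundary by simp
qed

lemma sum_lessThan_add_nat: "(\<Sum>k<m + n. f k) = (\<Sum>k<m. f k) + (\<Sum>k<n. f (m + k :: nat))"
  by (induct n) (simp_all add: ac_simps)

text \<open>Green's formula for \<open>\<psi>'' = 0\<close>: the boundary form is \<open>-\<parallel>\<psi>'\<parallel>\<^sup>2\<close>.\<close>

lemma affine_boundary_form:
  assumes a: "\<And>i. i < nI \<Longrightarrow> 0 \<le> a i"
  shows "bder nE nI a (affine_edge_fun nI a d (\<lambda>_. 0)) \<bullet>c bval nE nI a (affine_edge_fun nI a c d)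
    = - of_real (\<Sum>i<nI. a i * (cmod (d i))\<^sup>2)"
proof -
  let ?f = "\<lambda>k. bder nE nI a (affine_edge_fun nI a d (\<lambda>_. 0)) $ k * cnj (bval nE nI a (affine_edge_fun nI a c d) $ k)"
  have "bder nE nI a (affine_edge_fun nI a d (\<lambda>_. 0)) \<bullet>c bval nE nI a (affine_edge_fun nI a c d)
      = (\<Sum>k<nE + (nI + nI). ?f k)"
    by (simp add: cscalar_prod_as_sum[of _ "nE + 2 * nI"] bder_def bval_def mult_2)
  also have "\<dots> = (\<Sum>k<nE. ?f k) + (\<Sum>i<nI. ?f (nE + i)) + (\<Sum>i<nI. ?f (nE + (nI + i)))"
    by (simp add: sum_lessThan_add_nat)
  also have "\<dots> = (\<Sum>i<nI. d i * cnj (c i) - d i * cnj (c i + of_real (a i) * d i))"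
    using a by (simp add: bder_def bval_def affine_edge_fun_def sum_subtractf sum_negf)
  also have "\<dots> = - of_real (\<Sum>i<nI. a i * (cmod (d i))\<^sup>2)"
  proof -
    have "d i * cnj (c i) - d i * cnj (c i + of_real (a i) * d i) = - of_real (a i * (cmod (d i))\<^sup>2)" for i
      using complex_norm_square[of "d i"] by (simp add: algebra_simps)
    then show ?thesis by (simp add: sum_negf)
  qed
  finally show ?thesis .
qed

lemma affine_slopes_zero:
  assumes a_pos: "\<And>i. i < nI \<Longrightarrow> 0 < a i"
    and form: "0 \<le> Re (bder nE nI a (affine_edge_fun nI a d (\<lambda>_. 0)) \<bullet>c bval nE nI a (affine_edge_fun nI a c d))"
    and i: "i < nI"
  shows "d i = 0"
proof -
  define s where "s = (\<Sum>k<nI. a k * (cmod (d k))\<^sup>2)"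
  have terms_nonneg: "0 \<le> a k * (cmod (d k))\<^sup>2" if "k \<in> {..<nI}" for k
    using a_pos that by (simp add: less_imp_le)
  then have "0 \<le> s" unfolding s_def by (rule sum_nonneg)
  moreover have "s \<le> 0"
    using form affine_boundary_form[of nI a nE d c] a_pos by (simp add: s_def less_imp_le)
  ultimately have "s = 0" by simp
  then have "\<forall>k\<in>{..<nI}. a k * (cmod (d k))\<^sup>2 = 0"
    unfolding s_def using terms_nonneg by (subst (asm) sum_nonneg_eq_0_iff) auto
  then have "a i * (cmod (d i))\<^sup>2 = 0" using i by blast
  then show ?thesis using a_pos[OF i] by simp
qed

lemma adj_pair_cscalar_prod:
  fixes A B :: "complex mat"
  assumes A: "A \<in> carrier_mat n n" and B: "B \<in> carrier_mat n n" and \<phi>: "\<phi> \<in> carrier_vec n"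
  shows "(adj A *\<^sub>v \<phi>) \<bullet>c (- (adj B *\<^sub>v \<phi>)) = - cnj (((A * adj B) *\<^sub>v \<phi>) \<bullet>c \<phi>)"
proof -
  have "(adj A *\<^sub>v \<phi>) \<bullet>c (- (adj B *\<^sub>v \<phi>)) = - ((adj A *\<^sub>v \<phi>) \<bullet>c (adj B *\<^sub>v \<phi>))"
    using A B \<phi> by (intro cscalar_prod_uminus_right) simp
  also have "(adj A *\<^sub>v \<phi>) \<bullet>c (adj B *\<^sub>v \<phi>) = \<phi> \<bullet>c ((A * adj B) *\<^sub>v \<phi>)"
    using cscalar_prod_adj[OF adj_carrier[OF A] \<phi>, of "adj B *\<^sub>v \<phi>"]
      assoc_mult_mat_vec[OF A adj_carrier[OF B] \<phi>] B \<phi> by simp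
  also have "\<dots> = cnj (((A * adj B) *\<^sub>v \<phi>) \<bullet>c \<phi>)"
    using A B \<phi> by (intro cscalar_prod_swap) simp
  finally show ?thesis .
qed

lemma Delta_ker_subset_kernel_image:
  fixes A B :: "complex mat"
  assumes a_pos: "\<And>i. i < nI \<Longrightarrow> 0 < a i"
    and A: "A \<in> carrier_mat (nE + 2 * nI) (nE + 2 * nI)" and B: "B \<in> carrier_mat (nE + 2 * nI) (nE + 2 * nI)"
    and herm: "adj (A * adj B) = A * adj B"
    and trivial: "\<And>x. x \<in> carrier_vec (nE + 2 * nI) \<Longrightarrow> adj A *\<^sub>v x = 0\<^sub>v (nE + 2 * nI) \<Longrightarrow>
        adj B *\<^sub>v x = 0\<^sub>v (nE + 2 * nI) \<Longrightarrow> x = 0\<^sub>v (nE + 2 * nI)"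
    and nonpos: "\<And>\<phi>. \<phi> \<in> carrier_vec (nE + 2 * nI) \<Longrightarrow> Re ((A * adj B *\<^sub>v \<phi>) \<bullet>c \<phi>) \<le> 0"
  shows "Delta_ker nE nI a A B
    \<subseteq> (\<lambda>\<phi>. affine_edge_fun nI a (\<lambda>i. ((- adj B) *\<^sub>v \<phi>) $ (nE + i)) (\<lambda>_. 0)) ` mat_kernel (A * adj B)"
proof
  define n where "n = nE + 2 * nI"
  have A: "A \<in> carrier_mat n n" and B: "B \<in> carrier_mat n n" using A B by (simp_all add: n_def)
  have a: "0 \<le> a i" if "i < nI" for i using a_pos[OF that] by simp
  have trivial: "x = 0\<^sub>v n" if "x \<in> carrier_vec n" "adj A *\<^sub>v x = 0\<^sub>v n" "adj B *\<^sub>v x = 0\<^sub>v n" for x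
    using trivial that unfolding n_def by blast
  fix \<psi> assume "\<psi> \<in> Delta_ker nE nI a A B"
  from Delta_ker_affine[OF a this] obtain c d where \<psi>: "\<psi> = affine_edge_fun nI a c d"
    and boundary: "A *\<^sub>v bval nE nI a \<psi> + B *\<^sub>v bder nE nI a (affine_edge_fun nI a d (\<lambda>_. 0)) = 0\<^sub>v n"
    unfolding n_def by blast
  have "bval nE nI a \<psi> \<in> carrier_vec n" "bder nE nI a (affine_edge_fun nI a d (\<lambda>_. 0)) \<in> carrier_vec n"
    by (simp_all add: bval_def bder_def n_def)
  from boundary_relation_parametrisation[OF A B herm trivial this boundary]
  obtain \<phi> where \<phi>: "\<phi> \<in> carrier_vec n"
    and \<chi>1: "bval nE nI a \<psi> = - (adj B *\<^sub>v \<phi>)"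
    and \<chi>2: "bder nE nI a (affine_edge_fun nI a d (\<lambda>_. 0)) = adj A *\<^sub>v \<phi>"
    by blast
  have "0 \<le> Re (bder nE nI a (affine_edge_fun nI a d (\<lambda>_. 0)) \<bullet>c bval nE nI a (affine_edge_fun nI a c d))"
    using adj_pair_cscalar_prod[OF A B \<phi>] nonpos[OF \<phi>[unfolded n_def]] \<chi>1 \<chi>2 by (simp add: \<psi>)
  then have d: "d i = 0" if "i < nI" for i using affine_slopes_zero[of nI a nE d c i] a_pos that by blast
  have "adj A *\<^sub>v \<phi> = 0\<^sub>v n"
    unfolding \<chi>2[symmetric] by (intro eq_vecI) (auto simp: bder_def affine_edge_fun_def n_def d)
  then have "(A * adj B) *\<^sub>v \<phi> = 0\<^sub>v n"
    using hermitian_product_swap[OF A B herm] assoc_mult_mat_vec[OF B adj_carrier[OF A] \<phi>] B by simp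
  then have kernel: "\<phi> \<in> mat_kernel (A * adj B)" using A B \<phi> by (auto simp: mat_kernel_def n_def)
  have "c i = ((- adj B) *\<^sub>v \<phi>) $ (nE + i)" if "i < nI" for i
  proof -
    have "c i = bval nE nI a \<psi> $ (nE + i)"
      using that a[OF that] by (simp add: bval_def \<psi> affine_edge_fun_def)
    then show ?thesis using \<chi>1 that B \<phi> by (simp add: uminus_mult_mat_vec n_def)
  qed
  then have "\<psi> = affine_edge_fun nI a (\<lambda>i. ((- adj B) *\<^sub>v \<phi>) $ (nE + i)) (\<lambda>_. 0)"
    unfolding \<psi> using d by (auto simp: affine_edge_fun_def fun_eq_iff split: sum.splits)
  then show "\<psi> \<in> (\<lambda>\<phi>. affine_edge_fun nI a (\<lambda>i. ((- adj B) *\<^sub>v \<phi>) $ (nE + i)) (\<lambda>_. 0)) ` mat_kernel (A * adj B)"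
    using kernel by blast
qed

lemma vector_space_fscale: "Vector_Spaces.vector_space fscale"
  by unfold_locales (auto simp: fscale_def fun_eq_iff algebra_simps)

lemma sum_fun_apply: "sum f S x = (\<Sum>s\<in>S. f s x)"
  by (induct S rule: infinite_finite_induct) auto

lemma affine_edge_fun_const_sum:
  "affine_edge_fun nI a (\<lambda>i. \<Sum>b\<in>S. \<alpha> b * f b i) (\<lambda>_. 0) = (\<Sum>b\<in>S. fscale (\<alpha> b) (affine_edge_fun nI a (f b) (\<lambda>_. 0)))"
proof (induction S rule: infinite_finite_induct)
  case (insert b S)
  then show ?case
    by (auto simp: affine_edge_fun_def fscale_def fun_eq_iff sum_fun_apply algebra_simps split: sum.splits)
qed (auto simp: affine_edge_fun_def fun_eq_iff split: sum.splits)

lemma affine_edge_fun_kernel_span: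
  fixes H M :: "complex mat"
  assumes H: "H \<in> carrier_mat n n" and M: "M \<in> carrier_mat nr n" and nr: "nE + nI \<le> nr"
  obtains S where "finite S" "card S \<le> kernel_dim H"
    "(\<lambda>\<phi>. affine_edge_fun nI a (\<lambda>i. (M *\<^sub>v \<phi>) $ (nE + i)) (\<lambda>_. 0)) ` mat_kernel H
       \<subseteq> Modules.module.span fscale S"
proof -
  define \<Psi> where "\<Psi> \<phi> = affine_edge_fun nI a (\<lambda>i. (M *\<^sub>v \<phi>) $ (nE + i)) (\<lambda>_. 0)" for \<phi>
  obtain Bs where Bs: "finite Bs" "Bs \<subseteq> mat_kernel H" "card Bs = kernel_dim H"
    and coords: "\<And>v. v \<in> mat_kernel H \<Longrightarrow> \<exists>\<alpha>. \<forall>i<n. v $ i = (\<Sum>b\<in>Bs. \<alpha> b * b $ i)"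
    using mat_kernel_coordinates[OF H] by blast
  have Bs_carrier: "Bs \<subseteq> carrier_vec n" using Bs(2) mat_kernel_carrier[OF H] by auto
  interpret fscale: vector_space fscale by (rule vector_space_fscale)
  have "\<Psi> \<phi> \<in> fscale.span (\<Psi> ` Bs)" if \<phi>: "\<phi> \<in> mat_kernel H" for \<phi>
  proof -
    obtain \<alpha> where \<alpha>: "\<forall>l<n. \<phi> $ l = (\<Sum>b\<in>Bs. \<alpha> b * b $ l)" using coords[OF \<phi>] by blast
    have "\<phi> \<in> carrier_vec n" using \<phi> mat_kernel_carrier[OF H] by auto
    then have "(M *\<^sub>v \<phi>) $ (nE + i) = (\<Sum>b\<in>Bs. \<alpha> b * (M *\<^sub>v b) $ (nE + i))" if "i < nI" for i
      using mult_mat_vec_coordinates[OF M _ _ \<alpha> Bs_carrier] that nr by simp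
    then have "\<Psi> \<phi> = (\<Sum>b\<in>Bs. fscale (\<alpha> b) (\<Psi> b))"
      unfolding \<Psi>_def affine_edge_fun_const_sum[symmetric]
      by (auto simp: affine_edge_fun_def fun_eq_iff split: sum.splits)
    then show ?thesis by (simp, intro fscale.span_sum fscale.span_scale fscale.span_base imageI)
  qed
  moreover have "card (\<Psi> ` Bs) \<le> kernel_dim H" using card_image_le[OF Bs(1)] Bs(3) by simp
  ultimately show ?thesis using that[of "\<Psi> ` Bs"] Bs(1) unfolding \<Psi>_def by blast
qed

theorem proposition3p9:
  fixes nE nI :: nat and a :: "nat \<Rightarrow> real" and A B :: "complex mat"
  assumes a_pos: "\<And>i. i < nI \<Longrightarrow> a i > 0"
    and A_dim: "A \<in> carrier_mat (nE + 2 * nI) (nE + 2 * nI)"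
    and B_dim: "B \<in> carrier_mat (nE + 2 * nI) (nE + 2 * nI)"
    and rank_AB: "vec_space.rank (nE + 2 * nI) (mat_of_cols (nE + 2 * nI) (cols A @ cols B))
                    = nE + 2 * nI"
    and selfadj: "mat_adjoint (A * mat_adjoint B) = A * mat_adjoint B"
    and n_plus_0: "n_plus (A * mat_adjoint B) = 0"
  shows "(\<exists>S. finite S \<and> Delta_ker nE nI a A B \<subseteq> Modules.module.span fscale S) \<and>
         Vector_Spaces.vector_space.dim fscale (Delta_ker nE nI a A B) \<le> n_zero (A * mat_adjoint B)"
proof -
  define H where "H = A * adj B"
  have H: "H \<in> carrier_mat (nE + 2 * nI) (nE + 2 * nI)" using A_dim B_dim by (simp add: H_def)
  have herm: "adj H = H" using selfadj by (simp add: H_def)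
  have nonpos: "Re ((A * adj B *\<^sub>v \<phi>) \<bullet>c \<phi>) \<le> 0" if "\<phi> \<in> carrier_vec (nE + 2 * nI)" for \<phi>
    using hermitian_form_nonpos[OF H herm _ that] n_plus_zero_char_poly_root_nonpos[OF H herm]
      n_plus_0 by (simp add: H_def)
  have kernel_image: "Delta_ker nE nI a A B
      \<subseteq> (\<lambda>\<phi>. affine_edge_fun nI a (\<lambda>i. ((- adj B) *\<^sub>v \<phi>) $ (nE + i)) (\<lambda>_. 0)) ` mat_kernel H"
    unfolding H_def by (rule Delta_ker_subset_kernel_image[OF a_pos A_dim B_dim selfadj
        full_rank_adj_kernels_trivial[OF A_dim B_dim rank_AB] nonpos])
  obtain S where S: "finite S" "card S \<le> kernel_dim H"
    and image: "(\<lambda>\<phi>. affine_edge_fun nI a (\<lambda>i. ((- adj B) *\<^sub>v \<phi>) $ (nE + i)) (\<lambda>_. 0)) ` mat_kernel H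
       \<subseteq> Modules.module.span fscale S"
    using affine_edge_fun_kernel_span[OF H, of "- adj B" "nE + 2 * nI" nE nI a] B_dim by auto
  interpret fscale: vector_space fscale by (rule vector_space_fscale)
  have span: "Delta_ker nE nI a A B \<subseteq> fscale.span S" using kernel_image image by blast
  have "fscale.dim (Delta_ker nE nI a A B) \<le> card S" by (rule fscale.dim_le_card[OF span S(1)])
  also have "\<dots> \<le> n_zero H" using S(2) kernel_dim_le_n_zero[OF H] by simp
  finally show ?thesis using span S(1) by (auto simp: H_def)
qed

end
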